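(* Assume hypotheses (H1) and (H2) below with constants $0<\delta<1$, $\gamma>0$. Fix a positive integer $r$ and a prime $p$. If $X>p^{\frac{1+\gamma}{1-\delta}}$, then $$\frac{1}{|L(X)^{r_2}|}\sum_{K\in L(X)^{r_2}}a_\rho(p)^r=\frac{n_r}{1+f(p)}+O(p^{-1}),$$ where $n_r$ is the multiplicity of the trivial representation in $\rho^{\otimes r}$, and the implied constant depends only on $r$, $d$ and the constants in (H1), (H2).
   Context: $d\ge2$, $G=S_{d+1}$, $\rho$ the $d$-dimensional standard representation of $S_{d+1}$, fixed signature $(r_1,r_2)$. An $S_{d+1}$-field is a degree $d+1$ number field whose Galois closure has Galois group $S_{d+1}$; $L(s,\rho,K)=\zeta_K(s)/\zeta(s)=\sum a_\rho(n)n^{-s}$ (so $-1\le a_\rho(p)\le d$, and $a_\rho(p)=\chi_\rho(\mathrm{Frob}_p)$ for unramified $p$). $L(X)^{r_2}$ is the set of $S_{d+1}$-fields of signature $(r_1,r_2)$ with $|d_K|<X$, up to isomorphism. Local conditions: $\mathcal S_{p,C}$ ($p$ unramified, $\mathrm{Frob}_p\in C$) with weight $\frac{|C|}{|G|(1+f(p))}$; $\mathcal S_{p,r_i}$ ($p$ ramified of splitting type $r_i$, $i=1,\dots,w$) with weight $\frac{c_i(p)}{1+f(p)}$, where $f(p)=O(1/p)$ positive, $c_i(p)>0$, $\sum_ic_i(p)=f(p)$. For a finite set $\mathcal S$ of local conditions at distinct primes, $|\mathcal S|$ is the product of weights, and $L(X;\mathcal S)^{r_2}$ the subset of $L(X)^{r_2}$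 satisfying them. (H1) $|L(X)^{r_2}|=A(r_2)X+O(X^\delta)$; (H2) $|L(X;\mathcal S)^{r_2}|=|\mathcal S|A(r_2)X+O((\prod_{p\in\mathcal S}p)^\gamma X^\delta)$, uniformly in the primes and local conditions. *)

theory Defs
  imports "HOL-Analysis.Analysis" "HOL-Combinatorics.Permutations" "HOL-Computational_Algebra.Primes"
begin

text \<open>The symmetric group S_{d+1}, realised as permutations of {0..d}.\<close>
definition Sym :: "nat \<Rightarrow> (nat \<Rightarrow> nat) set" where
  "Sym d = {\<sigma>. \<sigma> permutes {0..d}}"

definition conj_class :: "nat \<Rightarrow> (nat \<Rightarrow> nat) \<Rightarrow> (nat \<Rightarrow> nat) set" where
  "conj_class d \<sigma> = {\<tau> \<circ> \<sigma> \<circ> inv \<tau> | \<tau>. \<tau> \<in> Sym d}"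

definition conj_classes :: "nat \<Rightarrow> (nat \<Rightarrow> nat) set set" where
  "conj_classes d = conj_class d ` Sym d"

text \<open>Character of the d-dimensional standard representation of S_{d+1}:
  (number of fixed points on {0..d}) - 1.\<close>
definition chi_std :: "nat \<Rightarrow> (nat \<Rightarrow> nat) \<Rightarrow> int" where
  "chi_std d \<sigma> = int (card {i \<in> {0..d}. \<sigma> i = i}) - 1"

text \<open>Multiplicity of the trivial representation in rho^(tensor r), computed as the
  inner product of the character of rho^(tensor r) with the trivial character.\<close>
definition n_mult :: "nat \<Rightarrow> nat \<Rightarrow> real" where
  "n_mult d r = (\<Sum>\<sigma>\<in>Sym d. real_of_int (chi_std d \<sigma> ^ r)) / fact (d + 1)"

text \<open>Local conditions at a prime: Unr C (p unramified, Frob_p in class C) or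
  Rm i (p ramified with splitting type r_i).\<close>
datatype loccond = Unr "(nat \<Rightarrow> nat) set" | Rm nat

definition valid_cond :: "nat \<Rightarrow> nat \<Rightarrow> loccond \<Rightarrow> bool" where
  "valid_cond d w c = (case c of Unr C \<Rightarrow> C \<in> conj_classes d | Rm i \<Rightarrow> i \<in> {1..w})"

text \<open>Whether the field K satisfies the local condition c at p, given the data
  unram (p unramified in K), frob (a Frobenius element in S_{d+1}), ramtype
  (index of the splitting type at a ramified p).\<close>
definition sat_cond ::
  "('k \<Rightarrow> nat \<Rightarrow> bool) \<Rightarrow> ('k \<Rightarrow> nat \<Rightarrow> (nat \<Rightarrow> nat)) \<Rightarrow> ('k \<Rightarrow> nat \<Rightarrow> nat)
     \<Rightarrow> 'k \<Rightarrow> nat \<Rightarrow> loccond \<Rightarrow> bool" where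
  "sat_cond unram frob ramtype K p c =
     (case c of Unr C \<Rightarrow> unram K p \<and> frob K p \<in> C
              | Rm i \<Rightarrow> \<not> unram K p \<and> ramtype K p = i)"

definition cond_weight ::
  "nat \<Rightarrow> (nat \<Rightarrow> real) \<Rightarrow> (nat \<Rightarrow> nat \<Rightarrow> real) \<Rightarrow> nat \<Rightarrow> loccond \<Rightarrow> real" where
  "cond_weight d f c p cnd =
     (case cnd of Unr C \<Rightarrow> real (card C) / (fact (d + 1) * (1 + f p))
                | Rm i \<Rightarrow> c i p / (1 + f p))"

definition Lset :: "'k set \<Rightarrow> ('k \<Rightarrow> real) \<Rightarrow> real \<Rightarrow> 'k set" where
  "Lset F disc X = {K \<in> F. disc K < X}"

end

theory Submission
  imports Defs
begin

(* Split L(X) according to the behaviour of the fields at p. On the fields unramified at p with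
   Frobenius in a conjugacy class C, a_rho(p)^r is the constant chi(C)^r, and (H2) counts them as
   |C| A X / (|G| (1 + f(p))) up to B p^gamma X^delta. Summing over the classes, their contribution
   is n_r A X / (1 + f(p)) up to O(p^gamma X^delta), and comparing with (H1) leaves at most
   A X f(p) + O(p^gamma X^delta) ramified fields, each contributing at most d^r. The threshold
   X > p^((1+gamma)/(1-delta)) is exactly what makes p^gamma X^delta <= X/p, so after dividing by
   |L(X)|, which is about A X, every error is O(1/p). *)

lemma conj_class_self: "\<sigma> \<in> Sym d \<Longrightarrow> \<sigma> \<in> conj_class d \<sigma>"
  unfolding conj_class_def Sym_def
  by (rule CollectI, rule exI[of _ id]) (auto simp: permutes_id)

lemma conj_class_subset_Sym: "\<sigma> \<in> Sym d \<Longrightarrow> conj_class d \<sigma> \<subseteq> Sym d"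
  unfolding conj_class_def Sym_def
  by (auto intro!: permutes_compose permutes_inv)

lemma conj_class_trans:
  assumes "\<rho> \<in> conj_class d \<sigma>"
  shows "conj_class d \<rho> \<subseteq> conj_class d \<sigma>"
proof
  fix x assume "x \<in> conj_class d \<rho>"
  then obtain u where u: "u permutes {0..d}" "x = u \<circ> \<rho> \<circ> inv u"
    unfolding conj_class_def Sym_def by auto
  obtain t where t: "t permutes {0..d}" "\<rho> = t \<circ> \<sigma> \<circ> inv t"
    using assms unfolding conj_class_def Sym_def by auto
  have "x = (u \<circ> t) \<circ> \<sigma> \<circ> inv (u \<circ> t)"
    using u t by (simp add: o_inv_distrib permutes_bij bij_is_inj bij_is_surj o_assoc)
  moreover have "u \<circ> t permutes {0..d}"
    using u t by (simp add: permutes_compose)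
  ultimately show "x \<in> conj_class d \<sigma>"
    unfolding conj_class_def Sym_def by blast
qed

lemma conj_class_sym:
  assumes "\<rho> \<in> conj_class d \<sigma>"
  shows "\<sigma> \<in> conj_class d \<rho>"
proof -
  obtain t where t: "t permutes {0..d}" "\<rho> = t \<circ> \<sigma> \<circ> inv t"
    using assms unfolding conj_class_def Sym_def by auto
  have "inv t \<circ> \<rho> \<circ> inv (inv t) = \<sigma>"
    using t by (simp add: fun_eq_iff permutes_inverses inv_inv_eq permutes_bij)
  moreover have "inv t permutes {0..d}"
    using t by (simp add: permutes_inv)
  ultimately show ?thesis
    unfolding conj_class_def Sym_def by blast
qed

lemma conj_class_eq: "\<rho> \<in> conj_class d \<sigma> \<Longrightarrow> conj_class d \<rho> = conj_class d \<sigma>"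
  by (meson conj_class_sym conj_class_trans subset_antisym)

lemma partition_on_conj_classes: "partition_on (Sym d) (conj_classes d)"
proof (rule partition_onI)
  show "\<Union> (conj_classes d) = Sym d"
    unfolding conj_classes_def using conj_class_subset_Sym conj_class_self by blast
  show "{} \<notin> conj_classes d"
    unfolding conj_classes_def using conj_class_self by blast
  fix C1 C2 assume "C1 \<in> conj_classes d" "C2 \<in> conj_classes d" "C1 \<noteq> C2"
  then show "disjnt C1 C2"
    unfolding conj_classes_def disjnt_iff by (metis conj_class_eq imageE)
qed

lemma finite_Sym: "finite (Sym d)"
  unfolding Sym_def by (simp add: finite_permutations)

lemma card_Sym: "card (Sym d) = fact (d + 1)"
  unfolding Sym_def by (simp add: card_permutations)

lemma chi_std_conj:
  assumes t: "t permutes {0..d}"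
  shows "chi_std d (t \<circ> \<sigma> \<circ> inv t) = chi_std d \<sigma>"
proof -
  have "{i \<in> {0..d}. (t \<circ> \<sigma> \<circ> inv t) i = i} = t ` {i \<in> {0..d}. \<sigma> i = i}"
  proof safe
    fix i assume i: "i \<in> {0..d}" "(t \<circ> \<sigma> \<circ> inv t) i = i"
    then have "\<sigma> (inv t i) = inv t i"
      by (metis comp_apply permutes_inverses(2) t)
    moreover have "inv t i \<in> {0..d}"
      using i t permutes_in_image permutes_inv by metis
    ultimately show "i \<in> t ` {i \<in> {0..d}. \<sigma> i = i}"
      using permutes_inverses(1)[OF t] by (metis (mono_tags, lifting) image_eqI mem_Collect_eq)
  next
    fix i assume "i \<in> {0..d}" "\<sigma> i = i"
    then show "t i \<in> {0..d}" "(t \<circ> \<sigma> \<circ> inv t) (t i) = t i"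
      using t permutes_in_image[OF t] by (simp_all add: permutes_inverses(2))
  qed
  then show ?thesis
    unfolding chi_std_def using permutes_inj[OF t] by (simp add: card_image inj_on_subset)
qed

lemma chi_std_conj_class:
  assumes "C \<in> conj_classes d" "\<sigma> \<in> C" "\<rho> \<in> C"
  shows "chi_std d \<sigma> = chi_std d \<rho>"
proof -
  obtain s where "C = conj_class d s"
    using assms(1) unfolding conj_classes_def by blast
  then have "chi_std d \<tau> = chi_std d s" if "\<tau> \<in> C" for \<tau>
    using that chi_std_conj unfolding conj_class_def Sym_def by blast
  then show ?thesis
    using assms(2,3) by simp
qed

lemma abs_chi_std_le:
  assumes "d \<ge> 1"
  shows "\<bar>real_of_int (chi_std d \<sigma>)\<bar> \<le> real d"
proof -
  have "card {i \<in> {0..d}. \<sigma> i = i} \<le> card {0..d}"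
    by (rule card_mono) auto
  then show ?thesis
    unfolding chi_std_def using assms by simp
qed

lemma abs_n_mult_le:
  assumes "d \<ge> 1"
  shows "\<bar>n_mult d r\<bar> \<le> real d ^ r"
proof -
  have "\<bar>\<Sum>\<sigma>\<in>Sym d. real_of_int (chi_std d \<sigma> ^ r)\<bar> \<le> (\<Sum>\<sigma>\<in>Sym d. real d ^ r)"
    using abs_chi_std_le[OF assms] by (intro sum_abs[THEN order_trans] sum_mono)
      (simp add: power_abs power_mono)
  also have "\<dots> = fact (d + 1) * real d ^ r"
    by (simp only: sum_constant card_Sym of_nat_fact)
  finally show ?thesis
    unfolding n_mult_def by (simp add: abs_divide pos_divide_le_eq mult.commute del: fact_Suc)
qed

lemma abs_n_mult_div_le:
  assumes "d \<ge> 1" and "t \<ge> 0"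
  shows "\<bar>n_mult d r / (1 + t)\<bar> \<le> real d ^ r"
proof -
  have "\<bar>n_mult d r / (1 + t)\<bar> = \<bar>n_mult d r\<bar> / (1 + t)"
    using \<open>t \<ge> 0\<close> by simp
  also have "\<dots> \<le> \<bar>n_mult d r\<bar> / 1"
    using \<open>t \<ge> 0\<close> by (intro divide_left_mono) auto
  also have "\<dots> \<le> real d ^ r"
    using abs_n_mult_le[OF \<open>d \<ge> 1\<close>] by simp
  finally show ?thesis .
qed

lemma sum_class_function_approx:
  fixes \<phi> :: "'k \<Rightarrow> 'a" and g :: "'a \<Rightarrow> real"
  assumes P: "partition_on A P" and "finite A" and "finite U" and "\<phi> ` U \<subseteq> A"
    and const: "\<And>C \<sigma> \<tau>. C \<in> P \<Longrightarrow> \<sigma> \<in> C \<Longrightarrow> \<tau> \<in> C \<Longrightarrow> g \<sigma> = g \<tau>"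
    and bound: "\<And>\<sigma>. \<sigma> \<in> A \<Longrightarrow> \<bar>g \<sigma>\<bar> \<le> M"
    and count: "\<And>C. C \<in> P \<Longrightarrow> \<bar>real (card {x \<in> U. \<phi> x \<in> C}) - w * real (card C)\<bar> \<le> E"
  shows "\<bar>(\<Sum>x\<in>U. g (\<phi> x)) - w * (\<Sum>\<sigma>\<in>A. g \<sigma>)\<bar> \<le> real (card P) * (M * E)"
proof -
  define U\<^sub>C where "U\<^sub>C C = {x \<in> U. \<phi> x \<in> C}" for C
  have finP: "finite P"
    using finite_elements[OF \<open>finite A\<close> P] .
  have U_eq: "U = (\<Union>C\<in>P. U\<^sub>C C)"
    using partition_onD1[OF P] \<open>\<phi> ` U \<subseteq> A\<close> unfolding U\<^sub>C_def by blast
  have "(\<Sum>x\<in>(\<Union>C\<in>P. U\<^sub>C C). g (\<phi> x)) = (\<Sum>C\<in>P. \<Sum>x\<in>U\<^sub>C C. g (\<phi> x))"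
  proof (rule sum.UNION_disjoint[OF finP])
    show "\<forall>C\<in>P. finite (U\<^sub>C C)"
      using \<open>finite U\<close> unfolding U\<^sub>C_def by simp
    show "\<forall>C\<in>P. \<forall>C'\<in>P. C \<noteq> C' \<longrightarrow> U\<^sub>C C \<inter> U\<^sub>C C' = {}"
      using partition_onD2[OF P] unfolding U\<^sub>C_def disjoint_def by blast
  qed
  then have sum_U: "(\<Sum>x\<in>U. g (\<phi> x)) = (\<Sum>C\<in>P. \<Sum>x\<in>U\<^sub>C C. g (\<phi> x))"
    by (simp only: U_eq[symmetric])
  have sum_A: "(\<Sum>\<sigma>\<in>A. g \<sigma>) = (\<Sum>C\<in>P. \<Sum>\<sigma>\<in>C. g \<sigma>)"
    using sum.partition[OF \<open>finite A\<close> P] .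
  have class_term: "\<bar>(\<Sum>x\<in>U\<^sub>C C. g (\<phi> x)) - w * (\<Sum>\<sigma>\<in>C. g \<sigma>)\<bar> \<le> M * E" if C: "C \<in> P" for C
  proof -
    obtain \<sigma>\<^sub>0 where "\<sigma>\<^sub>0 \<in> C"
      using partition_onD3[OF P] C by (metis ex_in_conv)
    then have "\<sigma>\<^sub>0 \<in> A" and g_eq: "\<And>\<sigma>. \<sigma> \<in> C \<Longrightarrow> g \<sigma> = g \<sigma>\<^sub>0"
      using partition_onD1[OF P] C const by blast+
    have "(\<Sum>x\<in>U\<^sub>C C. g (\<phi> x)) - w * (\<Sum>\<sigma>\<in>C. g \<sigma>)
        = g \<sigma>\<^sub>0 * (real (card (U\<^sub>C C)) - w * real (card C))"
      using g_eq by (simp add: U\<^sub>C_def algebra_simps)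
    also have "\<bar>\<dots>\<bar> \<le> M * E"
      unfolding abs_mult using bound[OF \<open>\<sigma>\<^sub>0 \<in> A\<close>] count[OF C]
      by (intro mult_mono) (auto simp: U\<^sub>C_def)
    finally show ?thesis .
  qed
  have "\<bar>(\<Sum>x\<in>U. g (\<phi> x)) - w * (\<Sum>\<sigma>\<in>A. g \<sigma>)\<bar>
      = \<bar>\<Sum>C\<in>P. (\<Sum>x\<in>U\<^sub>C C. g (\<phi> x)) - w * (\<Sum>\<sigma>\<in>C. g \<sigma>)\<bar>"
    by (simp add: sum_U sum_A sum_subtractf sum_distrib_left)
  also have "\<dots> \<le> (\<Sum>C\<in>P. M * E)"
    using class_term by (intro sum_abs[THEN order_trans] sum_mono)
  finally show ?thesis
    by simp
qed

lemma abs_sum_power_le: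
  fixes x :: "'k \<Rightarrow> real"
  assumes "\<And>K. K \<in> L \<Longrightarrow> \<bar>x K\<bar> \<le> M"
  shows "\<bar>\<Sum>K\<in>L. x K ^ r\<bar> \<le> real (card L) * M ^ r"
proof -
  have "\<bar>\<Sum>K\<in>L. x K ^ r\<bar> \<le> (\<Sum>K\<in>L. \<bar>x K\<bar> ^ r)"
    by (rule sum_abs[THEN order_trans]) (simp add: power_abs)
  also have "\<dots> \<le> real (card L) * M ^ r"
    using assms by (intro sum_bounded_above power_mono) auto
  finally show ?thesis .
qed

lemma unramified_frobenius_approx:
  fixes U :: "'k set" and frob :: "'k \<Rightarrow> nat \<Rightarrow> nat" and t T E :: real
  assumes "d \<ge> 1" and "finite U" and "t > 0" and frob_U: "frob ` U \<subseteq> Sym d"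
    and count_classes: "\<And>C. C \<in> conj_classes d \<Longrightarrow>
      \<bar>real (card {K \<in> U. frob K \<in> C}) - T / (fact (d + 1) * (1 + t)) * real (card C)\<bar> \<le> E"
  shows "\<bar>(\<Sum>K\<in>U. real_of_int (chi_std d (frob K)) ^ r) - n_mult d r / (1 + t) * T\<bar>
      \<le> real (card (conj_classes d)) * real d ^ r * E"
    and "\<bar>real (card U) - T / (1 + t)\<bar> \<le> real (card (conj_classes d)) * E"
proof -
  define w where "w = T / (fact (d + 1) * (1 + t))"
  note class_sum = sum_class_function_approx[OF partition_on_conj_classes finite_Sym \<open>finite U\<close> frob_U
      _ _ count_classes[folded w_def]]
  have "\<bar>(\<Sum>K\<in>U. real_of_int (chi_std d (frob K)) ^ r) - w * (\<Sum>\<sigma>\<in>Sym d. real_of_int (chi_std d \<sigma>) ^ r)\<bar>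
      \<le> real (card (conj_classes d)) * (real d ^ r * E)"
    using abs_chi_std_le[OF \<open>d \<ge> 1\<close>]
    by (intro class_sum) (auto simp: power_abs power_mono dest: chi_std_conj_class)
  moreover have "w * (\<Sum>\<sigma>\<in>Sym d. real_of_int (chi_std d \<sigma>) ^ r) = n_mult d r / (1 + t) * T"
    unfolding w_def n_mult_def by simp
  ultimately show "\<bar>(\<Sum>K\<in>U. real_of_int (chi_std d (frob K)) ^ r) - n_mult d r / (1 + t) * T\<bar>
      \<le> real (card (conj_classes d)) * real d ^ r * E"
    by (simp add: mult.assoc)
  have "\<bar>(\<Sum>K\<in>U. 1) - w * (\<Sum>\<sigma>\<in>Sym d. 1)\<bar> \<le> real (card (conj_classes d)) * (1 * E)"
    by (rule class_sum) auto
  moreover have "w * (\<Sum>\<sigma>\<in>Sym d. 1) = T / (1 + t)"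
    unfolding w_def by (simp add: card_Sym del: fact_Suc)
  ultimately show "\<bar>real (card U) - T / (1 + t)\<bar> \<le> real (card (conj_classes d)) * E"
    by simp
qed

lemma frobenius_moment_approx:
  fixes L :: "'k set" and unram :: "'k \<Rightarrow> bool" and frob :: "'k \<Rightarrow> nat \<Rightarrow> nat"
    and a :: "'k \<Rightarrow> int" and t T E E\<^sub>L :: real
  assumes "d \<ge> 1" and "finite L" and "t > 0" and "T \<ge> 0"
    and unramified: "\<And>K. K \<in> L \<Longrightarrow> unram K \<Longrightarrow> frob K \<in> Sym d \<and> a K = chi_std d (frob K)"
    and a_bound: "\<And>K. K \<in> L \<Longrightarrow> \<bar>real_of_int (a K)\<bar> \<le> real d"
    and count_L: "\<bar>real (card L) - T\<bar> \<le> E\<^sub>L"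
    and count_classes: "\<And>C. C \<in> conj_classes d \<Longrightarrow>
      \<bar>real (card {K \<in> L. unram K \<and> frob K \<in> C}) - real (card C) / (fact (d + 1) * (1 + t)) * T\<bar> \<le> E"
  shows "\<bar>(\<Sum>K\<in>L. real_of_int (a K) ^ r) - n_mult d r / (1 + t) * real (card L)\<bar>
    \<le> real d ^ r * (2 * real (card (conj_classes d)) * E + 2 * E\<^sub>L + t * T)"
proof -
  define U where "U = {K \<in> L. unram K}"
  define k where "k = real (card (conj_classes d))"
  define \<mu> where "\<mu> = n_mult d r / (1 + t)"
  have "finite U" "U \<subseteq> L"
    using \<open>finite L\<close> unfolding U_def by auto
  have frob_U: "frob ` U \<subseteq> Sym d"
    using unramified unfolding U_def by auto
  have count_U: "\<bar>real (card {K \<in> U. frob K \<in> C}) - T / (fact (d + 1) * (1 + t)) * real (card C)\<bar> \<le> E"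
    if "C \<in> conj_classes d" for C
    using count_classes[OF that] unfolding U_def by (simp add: conj_assoc mult.commute)
  note unramified_approx =
    unramified_frobenius_approx[OF \<open>d \<ge> 1\<close> \<open>finite U\<close> \<open>t > 0\<close> frob_U count_U, folded k_def]
  have "(\<Sum>K\<in>U. real_of_int (a K) ^ r) = (\<Sum>K\<in>U. real_of_int (chi_std d (frob K)) ^ r)"
    using unramified unfolding U_def by simp
  then have sum_U: "\<bar>(\<Sum>K\<in>U. real_of_int (a K) ^ r) - \<mu> * T\<bar> \<le> k * real d ^ r * E"
    using unramified_approx(1)[of r] unfolding \<mu>_def by simp
  have "T - T / (1 + t) \<le> t * T"
    using \<open>t > 0\<close> \<open>T \<ge> 0\<close> by (simp add: field_simps)
  moreover have "real (card (L - U)) = real (card L) - real (card U)"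
    using \<open>finite L\<close> \<open>U \<subseteq> L\<close> by (simp add: card_Diff_subset card_mono finite_subset of_nat_diff)
  \<comment> \<open>the ramified fields are bounded as the complement of the unramified ones\<close>
  ultimately have card_R: "real (card (L - U)) \<le> E\<^sub>L + t * T + k * E"
    using unramified_approx(2) count_L by linarith
  have "\<bar>\<Sum>K\<in>L - U. real_of_int (a K) ^ r\<bar> \<le> real (card (L - U)) * real d ^ r"
    using a_bound by (intro abs_sum_power_le) auto
  also have "\<dots> \<le> (E\<^sub>L + t * T + k * E) * real d ^ r"
    using card_R by (intro mult_right_mono) auto
  finally have sum_R: "\<bar>\<Sum>K\<in>L - U. real_of_int (a K) ^ r\<bar> \<le> real d ^ r * (E\<^sub>L + t * T + k * E)"
    by (simp only: mult.commute)
  have "\<bar>\<mu>\<bar> \<le> real d ^ r"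
    unfolding \<mu>_def using abs_n_mult_div_le \<open>d \<ge> 1\<close> \<open>t > 0\<close> by simp
  then have "\<bar>\<mu> * (T - real (card L))\<bar> \<le> real d ^ r * E\<^sub>L"
    using count_L by (simp add: abs_mult abs_minus_commute mult_mono)
  moreover have "(\<Sum>K\<in>L. real_of_int (a K) ^ r) - \<mu> * real (card L)
      = ((\<Sum>K\<in>U. real_of_int (a K) ^ r) - \<mu> * T) + (\<Sum>K\<in>L - U. real_of_int (a K) ^ r)
        + \<mu> * (T - real (card L))"
    using sum.subset_diff[OF \<open>U \<subseteq> L\<close> \<open>finite L\<close>] by (simp add: algebra_simps)
  ultimately have "\<bar>(\<Sum>K\<in>L. real_of_int (a K) ^ r) - \<mu> * real (card L)\<bar>
      \<le> k * real d ^ r * E + real d ^ r * (E\<^sub>L + t * T + k * E) + real d ^ r * E\<^sub>L"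
    using sum_U sum_R by linarith
  then show ?thesis
    unfolding \<mu>_def k_def by (simp add: algebra_simps)
qed

lemma powr_mult_powr_le_div:
  fixes p X \<gamma> \<delta> :: real
  assumes "p > 0" and "\<delta> < 1" and X: "X > p powr ((1 + \<gamma>) / (1 - \<delta>))"
  shows "p powr \<gamma> * X powr \<delta> \<le> X / p"
proof -
  have "X > 0"
    using X by (rule order.strict_trans1[OF powr_ge_zero])
  have "p powr (1 + \<gamma>) = (p powr ((1 + \<gamma>) / (1 - \<delta>))) powr (1 - \<delta>)"
    using \<open>\<delta> < 1\<close> by (simp add: powr_powr)
  also have "\<dots> < X powr (1 - \<delta>)"
    using X \<open>\<delta> < 1\<close> by (intro powr_less_mono2) auto
  finally have "p * p powr \<gamma> < X powr (1 - \<delta>)"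
    using \<open>p > 0\<close> by (simp add: powr_add)
  then have "p powr \<gamma> * X / X powr (1 - \<delta>) \<le> p powr \<gamma> * X / (p * p powr \<gamma>)"
    using \<open>p > 0\<close> \<open>X > 0\<close> by (intro divide_left_mono) auto
  then show ?thesis
    using \<open>p > 0\<close> \<open>X > 0\<close> by (simp add: powr_diff)
qed

lemma abs_div_sub_le:
  fixes S N \<mu> M D A B X p :: real
  assumes "N \<ge> 0" and S: "\<bar>S\<bar> \<le> M * N" and \<mu>: "\<bar>\<mu>\<bar> \<le> M"
    and main: "\<bar>S - \<mu> * N\<bar> \<le> D * (X / p)" and count: "\<bar>N - A * X\<bar> \<le> B * (X / p)"
    and "A > 0" "X > 0" "p > 0"
  shows "\<bar>S / N - \<mu>\<bar> \<le> (2 * D + 4 * M * B) / (A * p)"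
proof -
  have "X / p > 0"
    using \<open>X > 0\<close> \<open>p > 0\<close> by simp
  have "0 \<le> D * (X / p)" "0 \<le> B * (X / p)"
    using main count abs_ge_zero order_trans by blast+
  then have "D \<ge> 0" "B \<ge> 0"
    using \<open>X / p > 0\<close> by (metis zero_le_mult_iff linorder_not_less)+
  have "M \<ge> 0"
    using \<mu> abs_ge_zero order_trans by blast
  have "A * p > 0"
    using \<open>A > 0\<close> \<open>p > 0\<close> by simp
  show ?thesis
  proof (cases "N \<ge> A * X / 2")
    case True
    then have "N > 0"
      using mult_pos_pos[OF \<open>A > 0\<close> \<open>X > 0\<close>] by linarith
    then have "\<bar>S / N - \<mu>\<bar> = \<bar>S - \<mu> * N\<bar> / N"
      by (simp add: field_simps)
    also have "\<dots> \<le> D * (X / p) / (A * X / 2)"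
      using main True \<open>A > 0\<close> \<open>X > 0\<close> \<open>D \<ge> 0\<close> \<open>X / p > 0\<close> by (intro frac_le) auto
    also have "\<dots> = 2 * D / (A * p)"
      using \<open>X > 0\<close> by (simp add: field_simps)
    also have "\<dots> \<le> (2 * D + 4 * M * B) / (A * p)"
      using \<open>A * p > 0\<close> \<open>M \<ge> 0\<close> \<open>B \<ge> 0\<close> by (intro divide_right_mono) auto
    finally show ?thesis .
  next
    case False
    \<comment> \<open>the error term of the count then exceeds half the main term, which forces p < 2 B / A\<close>
    then have "A * X / 2 < B * (X / p)"
      using count by linarith
    then have "A / 2 * X < B / p * X"
      by simp
    then have "A / 2 < B / p"
      using \<open>X > 0\<close> by (simp only: mult_less_cancel_right_pos)
    then have "A * p < 2 * B"
      using \<open>p > 0\<close> by (simp add: less_divide_eq)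
    have "\<bar>S / N\<bar> \<le> M"
      using S \<open>N \<ge> 0\<close> \<open>M \<ge> 0\<close> by (cases "N = 0") (simp_all add: abs_divide pos_divide_le_eq)
    then have "\<bar>S / N - \<mu>\<bar> \<le> 2 * M"
      using \<mu> by linarith
    also have "\<dots> = 2 * M * (A * p) / (A * p)"
      using \<open>A * p > 0\<close> by (metis less_irrefl nonzero_mult_div_cancel_right)
    also have "\<dots> \<le> (2 * D + 4 * M * B) / (A * p)"
    proof (rule divide_right_mono)
      have "2 * M * (A * p) \<le> 2 * M * (2 * B)"
        using \<open>A * p < 2 * B\<close> \<open>M \<ge> 0\<close> by (intro mult_left_mono) auto
      then show "2 * M * (A * p) \<le> 2 * D + 4 * M * B"
        using \<open>D \<ge> 0\<close> by linarith
    qed (use \<open>A * p > 0\<close> in simp)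
    finally show ?thesis .
  qed
qed

definition moment_error_const :: "nat \<Rightarrow> nat \<Rightarrow> real \<Rightarrow> real \<Rightarrow> real \<Rightarrow> real" where
  "moment_error_const d r A B C\<^sub>f =
     real d ^ r * (4 * real (card (conj_classes d)) * B + 8 * B + 2 * A * C\<^sub>f) / A"

lemma frobenius_mean_moment_bound:
  fixes L :: "'k set" and unram :: "'k \<Rightarrow> bool" and frob :: "'k \<Rightarrow> nat \<Rightarrow> nat"
    and a :: "'k \<Rightarrow> int" and p X t \<delta> \<gamma> A B C\<^sub>f :: real
  assumes "d \<ge> 1" and "\<delta> < 1" and "\<gamma> \<ge> 0" and "A > 0" and "p \<ge> 1"
    and X: "X > p powr ((1 + \<gamma>) / (1 - \<delta>))"
    and "0 < t" and t_le: "t \<le> C\<^sub>f / p" and "finite L"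
    and unramified: "\<And>K. K \<in> L \<Longrightarrow> unram K \<Longrightarrow> frob K \<in> Sym d \<and> a K = chi_std d (frob K)"
    and a_bound: "\<And>K. K \<in> L \<Longrightarrow> \<bar>real_of_int (a K)\<bar> \<le> real d"
    and count_L: "\<bar>real (card L) - A * X\<bar> \<le> B * X powr \<delta>"
    and count_classes: "\<And>C. C \<in> conj_classes d \<Longrightarrow>
      \<bar>real (card {K \<in> L. unram K \<and> frob K \<in> C}) - real (card C) / (fact (d + 1) * (1 + t)) * (A * X)\<bar>
        \<le> B * p powr \<gamma> * X powr \<delta>"
  shows "\<bar>(\<Sum>K\<in>L. real_of_int (a K) ^ r) / real (card L) - n_mult d r / (1 + t)\<bar>
    \<le> moment_error_const d r A B C\<^sub>f / p"
proof -
  define k where "k = real (card (conj_classes d))"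
  define D where "D = real d ^ r * (2 * k * B + 2 * B + A * C\<^sub>f)"
  have "p > 0" "X > 0"
    using \<open>p \<ge> 1\<close> X by (auto intro: order.strict_trans1[OF powr_ge_zero])
  have "0 \<le> B * X powr \<delta>"
    using count_L abs_ge_zero order_trans by blast
  then have "B \<ge> 0"
    using \<open>X > 0\<close> by (simp add: zero_le_mult_iff)
  have small_pX: "p powr \<gamma> * X powr \<delta> \<le> X / p"
    using powr_mult_powr_le_div[OF \<open>p > 0\<close> \<open>\<delta> < 1\<close> X] .
  moreover have "X powr \<delta> \<le> p powr \<gamma> * X powr \<delta>"
    using ge_one_powr_ge_zero[OF \<open>p \<ge> 1\<close> \<open>\<gamma> \<ge> 0\<close>] by (simp add: mult_le_cancel_right1)
  ultimately have "B * X powr \<delta> \<le> B * (X / p)"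
    using \<open>B \<ge> 0\<close> by (intro mult_left_mono) auto
  with count_L have count: "\<bar>real (card L) - A * X\<bar> \<le> B * (X / p)"
    by linarith
  have "B * p powr \<gamma> * X powr \<delta> \<le> B * (X / p)"
    using mult_left_mono[OF small_pX \<open>B \<ge> 0\<close>] by (simp add: mult.assoc)
  with count_classes have "\<bar>real (card {K \<in> L. unram K \<and> frob K \<in> C})
      - real (card C) / (fact (d + 1) * (1 + t)) * (A * X)\<bar> \<le> B * (X / p)"
    if "C \<in> conj_classes d" for C
    using that by (meson order_trans)
  then have "\<bar>(\<Sum>K\<in>L. real_of_int (a K) ^ r) - n_mult d r / (1 + t) * real (card L)\<bar>
      \<le> real d ^ r * (2 * k * (B * (X / p)) + 2 * (B * (X / p)) + t * (A * X))"
    unfolding k_def using \<open>A > 0\<close> \<open>X > 0\<close>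
    by (intro frobenius_moment_approx[OF \<open>d \<ge> 1\<close> \<open>finite L\<close> \<open>0 < t\<close> _ unramified a_bound count]) auto
  also have "\<dots> \<le> real d ^ r * (2 * k * (B * (X / p)) + 2 * (B * (X / p)) + C\<^sub>f / p * (A * X))"
    using t_le \<open>A > 0\<close> \<open>X > 0\<close> by (intro mult_left_mono add_left_mono mult_right_mono) auto
  also have "\<dots> = D * (X / p)"
    unfolding D_def by (simp add: algebra_simps)
  finally have main: "\<bar>(\<Sum>K\<in>L. real_of_int (a K) ^ r) - n_mult d r / (1 + t) * real (card L)\<bar>
      \<le> D * (X / p)" .
  have sum_bound: "\<bar>\<Sum>K\<in>L. real_of_int (a K) ^ r\<bar> \<le> real d ^ r * real (card L)"
    using abs_sum_power_le[of L "\<lambda>K. real_of_int (a K)"] a_bound by (simp add: mult.commute)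
  have "\<bar>n_mult d r / (1 + t)\<bar> \<le> real d ^ r"
    using abs_n_mult_div_le \<open>d \<ge> 1\<close> \<open>t > 0\<close> by simp
  from abs_div_sub_le[OF _ sum_bound this main count \<open>A > 0\<close> \<open>X > 0\<close> \<open>p > 0\<close>]
  have "\<bar>(\<Sum>K\<in>L. real_of_int (a K) ^ r) / real (card L) - n_mult d r / (1 + t)\<bar>
      \<le> (2 * D + 4 * real d ^ r * B) / (A * p)"
    by simp
  also have "\<dots> = moment_error_const d r A B C\<^sub>f / p"
    unfolding moment_error_const_def D_def k_def by (simp add: field_simps)
  finally show ?thesis .
qed

lemma frobenius_mean_moment_bound_family:
  fixes F :: "'k set" and disc :: "'k \<Rightarrow> real" and a :: "'k \<Rightarrow> nat \<Rightarrow> int"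
    and unram :: "'k \<Rightarrow> nat \<Rightarrow> bool" and frob :: "'k \<Rightarrow> nat \<Rightarrow> nat \<Rightarrow> nat"
    and ramtype :: "'k \<Rightarrow> nat \<Rightarrow> nat" and f :: "nat \<Rightarrow> real" and c :: "nat \<Rightarrow> nat \<Rightarrow> real"
    and \<delta> \<gamma> A B C\<^sub>f X :: real
  assumes "d \<ge> 1" and "\<delta> < 1" and "\<gamma> \<ge> 0" and "A > 0"
    and f: "\<forall>p. prime p \<longrightarrow> 0 < f p \<and> f p \<le> C\<^sub>f / real p"
    and local: "\<forall>K\<in>F. \<forall>p. prime p \<longrightarrow>
            (unram K p \<longrightarrow> frob K p \<in> Sym d \<and> a K p = chi_std d (frob K p))
          \<and> (\<not> unram K p \<longrightarrow> ramtype K p \<in> {1..w})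
          \<and> -1 \<le> a K p \<and> a K p \<le> int d"
    and finite: "\<forall>X. finite (Lset F disc X)"
    and H1: "\<forall>X\<ge>1. \<bar>real (card (Lset F disc X)) - A * X\<bar> \<le> B * X powr \<delta>"
    and H2: "\<forall>(S :: nat set) (cnd :: nat \<Rightarrow> loccond) X.
           finite S \<and> (\<forall>q\<in>S. prime q \<and> valid_cond d w (cnd q)) \<and> X \<ge> 1 \<longrightarrow>
           \<bar>real (card {K \<in> Lset F disc X. \<forall>q\<in>S. sat_cond unram frob ramtype K q (cnd q)})
              - (\<Prod>q\<in>S. cond_weight d f c q (cnd q)) * A * X\<bar>
             \<le> B * (real (\<Prod>q\<in>S. q)) powr \<gamma> * X powr \<delta>"
    and "prime p" and X: "X > real p powr ((1 + \<gamma>) / (1 - \<delta>))"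
  shows "\<bar>(\<Sum>K\<in>Lset F disc X. real_of_int (a K p) ^ r) / real (card (Lset F disc X))
               - n_mult d r / (1 + f p)\<bar> \<le> moment_error_const d r A B C\<^sub>f / real p"
proof -
  have "real p \<ge> 1"
    using prime_ge_1_nat[OF \<open>prime p\<close>] by simp
  then have "X \<ge> 1"
    using X \<open>\<delta> < 1\<close> \<open>\<gamma> \<ge> 0\<close> ge_one_powr_ge_zero[of "real p" "(1 + \<gamma>) / (1 - \<delta>)"] by auto
  have local_p: "unram K p \<Longrightarrow> frob K p \<in> Sym d \<and> a K p = chi_std d (frob K p)"
    "\<bar>real_of_int (a K p)\<bar> \<le> real d" if "K \<in> Lset F disc X" for K
  proof -
    have "K \<in> F"
      using that unfolding Lset_def by blast
    then have "unram K p \<longrightarrow> frob K p \<in> Sym d \<and> a K p = chi_std d (frob K p)"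
      and "-1 \<le> a K p" "a K p \<le> int d"
      using local \<open>prime p\<close> by blast+
    then show "unram K p \<Longrightarrow> frob K p \<in> Sym d \<and> a K p = chi_std d (frob K p)"
      and "\<bar>real_of_int (a K p)\<bar> \<le> real d"
      using \<open>d \<ge> 1\<close> by simp_all
  qed
  have count_classes: "\<bar>real (card {K \<in> Lset F disc X. unram K p \<and> frob K p \<in> C})
      - real (card C) / (fact (d + 1) * (1 + f p)) * (A * X)\<bar> \<le> B * real p powr \<gamma> * X powr \<delta>"
    if "C \<in> conj_classes d" for C
  proof -
    have "valid_cond d w (Unr C)"
      using that unfolding valid_cond_def by simp
    then have "\<bar>real (card {K \<in> Lset F disc X. \<forall>q\<in>{p}. sat_cond unram frob ramtype K q (Unr C)})
        - (\<Prod>q\<in>{p}. cond_weight d f c q (Unr C)) * A * X\<bar>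
        \<le> B * (real (\<Prod>q\<in>{p}. q)) powr \<gamma> * X powr \<delta>"
      using H2[rule_format, of "{p}" "\<lambda>_. Unr C" X] \<open>prime p\<close> \<open>X \<ge> 1\<close> by blast
    then show ?thesis
      unfolding sat_cond_def cond_weight_def by (simp add: mult.assoc)
  qed
  show ?thesis
    using f \<open>prime p\<close> finite H1 \<open>X \<ge> 1\<close>
    by (intro frobenius_mean_moment_bound[where unram = "\<lambda>K. unram K p" and frob = "\<lambda>K. frob K p"
          and a = "\<lambda>K. a K p", OF \<open>d \<ge> 1\<close> \<open>\<delta> < 1\<close> \<open>\<gamma> \<ge> 0\<close> \<open>A > 0\<close>
          \<open>real p \<ge> 1\<close> X _ _ _ local_p _ count_classes]) auto
qed

theorem mainTheorem7:
  fixes d r :: nat and \<delta> \<gamma> A B Cf :: real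
  assumes "d \<ge> 2" and "r > 0" and "0 < \<delta>" and "\<delta> < 1" and "\<gamma> > 0" and "A > 0"
  shows "\<exists>M::real. \<forall>(F :: 'k set) (disc :: 'k \<Rightarrow> real) (a :: 'k \<Rightarrow> nat \<Rightarrow> int)
            (unram :: 'k \<Rightarrow> nat \<Rightarrow> bool) (frob :: 'k \<Rightarrow> nat \<Rightarrow> (nat \<Rightarrow> nat))
            (ramtype :: 'k \<Rightarrow> nat \<Rightarrow> nat) (w :: nat) (f :: nat \<Rightarrow> real)
            (c :: nat \<Rightarrow> nat \<Rightarrow> real).
     ( \<comment> \<open>f(p) = O(1/p) positive; c_i(p) > 0 with sum f(p)\<close>
       (\<forall>p. prime p \<longrightarrow> 0 < f p \<and> f p \<le> Cf / real p)
     \<and> (\<forall>p. prime p \<longrightarrow> (\<forall>i\<in>{1..w}. c i p > 0) \<and> (\<Sum>i=1..w. c i p) = f p)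
       \<comment> \<open>local data of the fields\<close>
     \<and> (\<forall>K\<in>F. \<forall>p. prime p \<longrightarrow>
            (unram K p \<longrightarrow> frob K p \<in> Sym d \<and> a K p = chi_std d (frob K p))
          \<and> (\<not> unram K p \<longrightarrow> ramtype K p \<in> {1..w})
          \<and> -1 \<le> a K p \<and> a K p \<le> int d)
     \<and> (\<forall>X. finite (Lset F disc X))
       \<comment> \<open>(H1)\<close>
     \<and> (\<forall>X\<ge>1. \<bar>real (card (Lset F disc X)) - A * X\<bar> \<le> B * X powr \<delta>)
       \<comment> \<open>(H2)\<close>
     \<and> (\<forall>(S :: nat set) (cnd :: nat \<Rightarrow> loccond) X.
           finite S \<and> (\<forall>q\<in>S. prime q \<and> valid_cond d w (cnd q)) \<and> X \<ge> 1 \<longrightarrow>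
           \<bar>real (card {K \<in> Lset F disc X. \<forall>q\<in>S. sat_cond unram frob ramtype K q (cnd q)})
              - (\<Prod>q\<in>S. cond_weight d f c q (cnd q)) * A * X\<bar>
             \<le> B * (real (\<Prod>q\<in>S. q)) powr \<gamma> * X powr \<delta>))
     \<longrightarrow> (\<forall>(p::nat) (X::real). prime p \<and> X > real p powr ((1 + \<gamma>) / (1 - \<delta>)) \<longrightarrow>
            \<bar>(\<Sum>K\<in>Lset F disc X. real_of_int (a K p) ^ r) / real (card (Lset F disc X))
               - n_mult d r / (1 + f p)\<bar> \<le> M / real p)"
  using assms
  by (intro exI[of _ "moment_error_const d r A B Cf"] allI impI; elim conjE)
    (rule frobenius_mean_moment_bound_family; simp)

end
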